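(* For every $\mu\in\Delta(\Omega)$ and $c\ge0$, in the optimization problem $$V(\mu,c)=\sup\Big\{\sum_m\lambda_mu^*_S(\nu_m):\sum_m\lambda_m\nu_m=\mu,\ \sum_m\lambda_mH(\nu_m)\ge H(\mu)-c\Big\}$$ the number of posteriors can be chosen to be at most $\min\{|A|,|\Omega|+1\}$; that is, the supremum is unchanged when restricted to splittings $(\lambda_m,\nu_m)_m$ with at most $\min\{|A|,|\Omega|+1\}$ elements.
   Context: For a finite set $S$, $\Delta(S)$ is the set of probability distributions on $S$. $\Omega$ is a finite set of states, $A$ a finite set of actions, $u_S,u_R:\Omega\times A\to\mathbb{R}$ payoff functions of sender and receiver. For $\nu\in\Delta(\Omega)$, $A^*(\nu)=\arg\max_{a\in A}\sum_\omega\nu(\omega)u_R(\omega,a)$ and $u^*_S(\nu)=\min_{a\in A^*(\nu)}\sum_\omega\nu(\omega)u_S(\omega,a)$. $H(q)=-\sum_sq(s)\log_2q(s)$ ($0\log0=0$). The supremum is over finite families $(\lambda_m,\nu_m)_m$ with $\nu_m\in\Delta(\Omega)$, $\lambda_m\ge0$, $\sum_m\lambda_m=1$. *)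

theory Defs
  imports "HOL-Analysis.Analysis"
begin

definition Delta :: "('s::finite \<Rightarrow> real) set" where
  "Delta = {q. (\<forall>s. 0 \<le> q s) \<and> (\<Sum>s\<in>UNIV. q s) = 1}"

definition H :: "('s::finite \<Rightarrow> real) \<Rightarrow> real" where
  "H q = - (\<Sum>s\<in>UNIV. (if q s = 0 then 0 else q s * log 2 (q s)))"

definition expu :: "('w::finite \<Rightarrow> 'a \<Rightarrow> real) \<Rightarrow> ('w \<Rightarrow> real) \<Rightarrow> 'a \<Rightarrow> real" where
  "expu u nu a = (\<Sum>w\<in>UNIV. nu w * u w a)"

definition Astar :: "('w::finite \<Rightarrow> 'a::finite \<Rightarrow> real) \<Rightarrow> ('w \<Rightarrow> real) \<Rightarrow> 'a set" where
  "Astar uR nu = {a. \<forall>b. expu uR nu b \<le> expu uR nu a}"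

text \<open>Sender's indirect utility u*_S(nu) (receiver breaks ties against the sender).\<close>
definition ustarS :: "('w::finite \<Rightarrow> 'a::finite \<Rightarrow> real) \<Rightarrow> ('w \<Rightarrow> 'a \<Rightarrow> real) \<Rightarrow> ('w \<Rightarrow> real) \<Rightarrow> real" where
  "ustarS uS uR nu = Min (expu uS nu ` Astar uR nu)"

definition feasible :: "('w::finite \<Rightarrow> real) \<Rightarrow> real \<Rightarrow> (real \<times> ('w \<Rightarrow> real)) list \<Rightarrow> bool" where
  "feasible mu c F \<longleftrightarrow>
     (\<forall>p\<in>set F. 0 \<le> fst p \<and> snd p \<in> Delta) \<and>
     (\<Sum>p\<leftarrow>F. fst p) = 1 \<and>
     (\<forall>w. (\<Sum>p\<leftarrow>F. fst p * snd p w) = mu w) \<and>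
     (\<Sum>p\<leftarrow>F. fst p * H (snd p)) \<ge> H mu - c"

definition objval :: "('w::finite \<Rightarrow> 'a::finite \<Rightarrow> real) \<Rightarrow> ('w \<Rightarrow> 'a \<Rightarrow> real) \<Rightarrow> (real \<times> ('w \<Rightarrow> real)) list \<Rightarrow> real" where
  "objval uS uR F = (\<Sum>p\<leftarrow>F. fst p * ustarS uS uR (snd p))"

definition V :: "('w::finite \<Rightarrow> 'a::finite \<Rightarrow> real) \<Rightarrow> ('w \<Rightarrow> 'a \<Rightarrow> real) \<Rightarrow> ('w \<Rightarrow> real) \<Rightarrow> real \<Rightarrow> real" where
  "V uS uR mu c = Sup (objval uS uR ` {F. feasible mu c F})"

end

theory Submission imports Defs begin

text \<open>Group the posteriors of a splitting by a best response of the receiver and replace each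
  group by its average. The prior is preserved, expected entropy does not decrease since \<open>H\<close> is
  concave, and the sender's value does not decrease: the common best response stays optimal at
  the average, so the sender-worst best response there is optimal at every pooled posterior.
  This leaves at most \<open>|A|\<close> posteriors. Then, as in Caratheodory's theorem, more than
  \<open>|\<Omega>| + 1\<close> vectors \<open>(\<nu>\<^sub>m, H \<nu>\<^sub>m) \<in> \<real>\<^sup>\<Omega> \<times> \<real>\<close> are linearly dependent, and shifting the weights along a
  dependence, oriented so that the sender's value does not drop, until one weight vanishes keeps
  all constraints and removes a posterior.\<close>

section \<open>Concavity of entropy\<close>

definition xlogx :: "real \<Rightarrow> real" where
  "xlogx x = (if x = 0 then 0 else x * log 2 x)"

lemma H_eq_sum_xlogx: "H q = - (\<Sum>s\<in>UNIV. xlogx (q s))"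
  by (simp add: H_def xlogx_def)

lemma convex_on_xlogx_pos: "convex_on {0<..} (\<lambda>x::real. x * log 2 x)"
proof (rule convex_on_realI[where f' = "\<lambda>x. log 2 x + 1 / ln 2"])
  show "((\<lambda>x. x * log 2 x) has_real_derivative log 2 x + 1 / ln 2) (at x)"
    if "x \<in> {0<..}" for x :: real
    using that by (auto intro!: derivative_eq_intros simp: log_def field_simps)
qed auto

lemma xlogx_mult_le:
  assumes "0 < s" "s < 1" "0 \<le> z"
  shows "xlogx (s * z) \<le> s * xlogx z"
proof (cases "z = 0")
  case False
  with assms have "log 2 (s * z) = log 2 s + log 2 z" "log 2 s < 0"
    by (simp_all add: log_mult)
  with assms False show ?thesis
    by (simp add: xlogx_def algebra_simps mult_nonneg_nonpos)
qed (simp add: xlogx_def)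

lemma convex_on_xlogx: "convex_on {0..} xlogx"
proof (rule convex_onI)
  fix t x y :: real assume t: "0 < t" "t < 1" and x: "x \<in> {0..}" and y: "y \<in> {0..}"
  show "xlogx ((1 - t) *\<^sub>R x + t *\<^sub>R y) \<le> (1 - t) * xlogx x + t * xlogx y"
  proof (cases "x = 0 \<or> y = 0")
    case True
    then show ?thesis
    proof
      assume "x = 0"
      then show ?thesis using xlogx_mult_le[of t y] t y by (simp add: xlogx_def)
    next
      assume "y = 0"
      then show ?thesis using xlogx_mult_le[of "1 - t" x] t x by (simp add: xlogx_def)
    qed
  next
    case False
    with x y have "0 < x" "0 < y" by auto
    with t have "0 < (1 - t) * x + t * y" by (simp add: add_pos_pos)
    with convex_onD[OF convex_on_xlogx_pos, of t x y] \<open>0 < x\<close> \<open>0 < y\<close> t show ?thesis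
      by (simp add: xlogx_def)
  qed
qed simp

lemma mixture_in_Delta:
  assumes "finite K" "\<And>k. k \<in> K \<Longrightarrow> 0 \<le> a k" "sum a K = 1"
    and "\<And>k. k \<in> K \<Longrightarrow> v k \<in> Delta"
  shows "(\<lambda>s. \<Sum>k\<in>K. a k * v k s) \<in> Delta"
proof -
  have "(\<Sum>s\<in>UNIV. \<Sum>k\<in>K. a k * v k s) = (\<Sum>k\<in>K. a k * (\<Sum>s\<in>UNIV. v k s))"
    by (simp add: sum.swap[of _ UNIV] sum_distrib_left)
  also have "\<dots> = 1" using assms by (simp add: Delta_def)
  finally show ?thesis using assms by (auto simp: Delta_def intro!: sum_nonneg)
qed

lemma H_mixture_ge:
  assumes K: "finite K" "K \<noteq> {}" and a: "\<And>k. k \<in> K \<Longrightarrow> 0 \<le> a k" "sum a K = 1"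
    and v: "\<And>k. k \<in> K \<Longrightarrow> v k \<in> Delta"
  shows "(\<Sum>k\<in>K. a k * H (v k)) \<le> H (\<lambda>s. \<Sum>k\<in>K. a k * v k s)"
proof -
  have "xlogx (\<Sum>k\<in>K. a k * v k s) \<le> (\<Sum>k\<in>K. a k * xlogx (v k s))" for s
    using convex_on_sum[OF K convex_on_xlogx a(2) a(1), of "\<lambda>k. v k s"] v
    by (auto simp: Delta_def)
  then have "(\<Sum>s\<in>UNIV. xlogx (\<Sum>k\<in>K. a k * v k s)) \<le> (\<Sum>s\<in>UNIV. \<Sum>k\<in>K. a k * xlogx (v k s))"
    by (rule sum_mono)
  also have "\<dots> = (\<Sum>k\<in>K. a k * (\<Sum>s\<in>UNIV. xlogx (v k s)))"
    by (simp add: sum_distrib_left sum.swap[of _ UNIV])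
  finally show ?thesis by (simp add: H_eq_sum_xlogx sum_distrib_left sum_negf)
qed

lemma expu_mixture:
  "expu u (\<lambda>w. \<Sum>k\<in>K. a k * v k w) x = (\<Sum>k\<in>K. a k * expu u (v k) x)"
  unfolding expu_def by (simp add: sum_distrib_right sum_distrib_left mult.assoc sum.swap[of _ UNIV])

lemma Astar_nonempty: "\<exists>a. a \<in> Astar uR nu"
proof -
  let ?f = "expu uR nu"
  have "Max (range ?f) \<in> range ?f" by (rule Max_in) auto
  then obtain a where "?f a = Max (range ?f)" by (metis imageE)
  then have "a \<in> Astar uR nu" by (simp add: Astar_def)
  then show ?thesis ..
qed

lemma ustarS_attained:
  obtains a where "a \<in> Astar uR nu" "expu uS nu a = ustarS uS uR nu"
proof -
  have "expu uS nu ` Astar uR nu \<noteq> {}" using Astar_nonempty by blast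
  then have "ustarS uS uR nu \<in> expu uS nu ` Astar uR nu"
    unfolding ustarS_def by (intro Min_in) auto
  then show ?thesis using that by auto
qed

lemma ustarS_le: "a \<in> Astar uR nu \<Longrightarrow> ustarS uS uR nu \<le> expu uS nu a"
  unfolding ustarS_def by (intro Min_le) auto

lemma ustarS_mixture_ge:
  assumes K: "finite K" and a: "\<And>k. k \<in> K \<Longrightarrow> 0 \<le> a k"
    and b: "\<And>k. k \<in> K \<Longrightarrow> b \<in> Astar uR (v k)"
  shows "(\<Sum>k\<in>K. a k * ustarS uS uR (v k)) \<le> ustarS uS uR (\<lambda>w. \<Sum>k\<in>K. a k * v k w)"
proof -
  let ?m = "\<lambda>w. \<Sum>k\<in>K. a k * v k w"
  obtain b' where b': "b' \<in> Astar uR ?m" "expu uS ?m b' = ustarS uS uR ?m"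
    using ustarS_attained by blast
  define regret where "regret k = a k * (expu uR (v k) b - expu uR (v k) b')" for k
  have regret_nonneg: "0 \<le> regret k" if "k \<in> K" for k
    using b[OF that] a[OF that] by (simp add: regret_def Astar_def)
  have "sum regret K = expu uR ?m b - expu uR ?m b'"
    by (simp add: regret_def expu_mixture right_diff_distrib sum_subtractf)
  also have "\<dots> \<le> 0" using b'(1) by (simp add: Astar_def)
  finally have "sum regret K = 0" using sum_nonneg[of K regret] regret_nonneg by simp
  then have regret_zero: "regret k = 0" if "k \<in> K" for k
    using sum_nonneg_eq_0_iff[OF K, of regret] regret_nonneg that by blast
  have "a k * ustarS uS uR (v k) \<le> a k * expu uS (v k) b'" if k: "k \<in> K" for k
  proof (cases "a k = 0")
    case False
    then have "expu uR (v k) b' = expu uR (v k) b" using regret_zero[OF k] by (simp add: regret_def)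
    then have "b' \<in> Astar uR (v k)" using b[OF k] by (simp add: Astar_def)
    then show ?thesis using a[OF k] by (simp add: ustarS_le mult_left_mono)
  qed simp
  then have "(\<Sum>k\<in>K. a k * ustarS uS uR (v k)) \<le> (\<Sum>k\<in>K. a k * expu uS (v k) b')"
    by (rule sum_mono)
  also have "\<dots> = ustarS uS uR ?m" using b'(2) by (simp add: expu_mixture)
  finally show ?thesis .
qed

section \<open>Pooling posteriors with a common best response\<close>

text \<open>Splittings indexed by an arbitrary finite set rather than by list positions, so that
  posteriors can be pooled and removed.\<close>
definition splitting ::
    "('w::finite \<Rightarrow> real) \<Rightarrow> real \<Rightarrow> 'i set \<Rightarrow> ('i \<Rightarrow> real) \<Rightarrow> ('i \<Rightarrow> 'w \<Rightarrow> real) \<Rightarrow> bool" where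
  "splitting mu c I l v \<longleftrightarrow> finite I \<and> (\<forall>i\<in>I. 0 \<le> l i \<and> v i \<in> Delta) \<and> sum l I = 1 \<and>
     (\<forall>w. (\<Sum>i\<in>I. l i * v i w) = mu w) \<and> H mu - c \<le> (\<Sum>i\<in>I. l i * H (v i))"

definition splitting_value :: "('w::finite \<Rightarrow> 'a::finite \<Rightarrow> real) \<Rightarrow> ('w \<Rightarrow> 'a \<Rightarrow> real) \<Rightarrow>
    'i set \<Rightarrow> ('i \<Rightarrow> real) \<Rightarrow> ('i \<Rightarrow> 'w \<Rightarrow> real) \<Rightarrow> real" where
  "splitting_value uS uR I l v = (\<Sum>i\<in>I. l i * ustarS uS uR (v i))"

lemma splitting_restrict_support:
  assumes "splitting mu c I l v"
  shows "splitting mu c {i\<in>I. 0 < l i} l v"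
    and "splitting_value uS uR {i\<in>I. 0 < l i} l v = splitting_value uS uR I l v"
proof -
  have fin: "finite I" and l0: "\<And>i. i \<in> I \<Longrightarrow> 0 \<le> l i"
    using assms by (auto simp: splitting_def)
  have restrict: "(\<Sum>i\<in>{i\<in>I. 0 < l i}. l i * f i) = (\<Sum>i\<in>I. l i * f i)" for f :: "_ \<Rightarrow> real"
    using l0 by (intro sum.mono_neutral_left fin) (auto simp: order_le_less)
  from restrict[of "\<lambda>_. 1"] restrict[of "\<lambda>i. v i _"] restrict[of "\<lambda>i. H (v i)"] assms
  show "splitting mu c {i\<in>I. 0 < l i} l v" by (simp add: splitting_def)
  show "splitting_value uS uR {i\<in>I. 0 < l i} l v = splitting_value uS uR I l v"
    unfolding splitting_value_def by (rule restrict)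
qed

definition pool_weight :: "('i \<Rightarrow> real) \<Rightarrow> ('i \<Rightarrow> 'j) \<Rightarrow> 'i set \<Rightarrow> 'j \<Rightarrow> real" where
  "pool_weight l g I j = sum l {i\<in>I. g i = j}"

definition pool_post ::
    "('i \<Rightarrow> real) \<Rightarrow> ('i \<Rightarrow> 'w \<Rightarrow> real) \<Rightarrow> ('i \<Rightarrow> 'j) \<Rightarrow> 'i set \<Rightarrow> 'j \<Rightarrow> 'w \<Rightarrow> real" where
  "pool_post l v g I j w = (\<Sum>i\<in>{i\<in>I. g i = j}. l i / pool_weight l g I j * v i w)"

lemma pool_weight_pos:
  assumes "finite I" "\<And>i. i \<in> I \<Longrightarrow> 0 < l i" "j \<in> g ` I"
  shows "0 < pool_weight l g I j"
proof -
  from assms(3) obtain i where "i \<in> I" "g i = j" by blast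
  then show ?thesis unfolding pool_weight_def using assms(1,2)
    by (intro sum_pos2[of _ i]) (auto intro: less_imp_le)
qed

lemma sum_regroup_pool:
  assumes fin: "finite I" and pos: "\<And>i. i \<in> I \<Longrightarrow> 0 < l i"
  shows "(\<Sum>i\<in>I. l i * f i) = (\<Sum>j\<in>g ` I. pool_weight l g I j *
           (\<Sum>i\<in>{i\<in>I. g i = j}. l i / pool_weight l g I j * f i))"
proof -
  have "(\<Sum>i\<in>I. l i * f i) = (\<Sum>j\<in>g ` I. \<Sum>i\<in>{i\<in>I. g i = j}. l i * f i)"
    by (rule sum.group[symmetric]) (auto simp: fin)
  also have "\<dots> = (\<Sum>j\<in>g ` I. pool_weight l g I j *
                    (\<Sum>i\<in>{i\<in>I. g i = j}. l i / pool_weight l g I j * f i))"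
  proof (rule sum.cong[OF refl])
    fix j assume "j \<in> g ` I"
    then have "0 < pool_weight l g I j" by (intro pool_weight_pos fin pos)
    then show "(\<Sum>i\<in>{i\<in>I. g i = j}. l i * f i) =
               pool_weight l g I j * (\<Sum>i\<in>{i\<in>I. g i = j}. l i / pool_weight l g I j * f i)"
      by (simp add: sum_distrib_left less_imp_neq[symmetric])
  qed
  finally show ?thesis .
qed

lemma splitting_pool:
  assumes S: "splitting mu c I l v" and pos: "\<And>i. i \<in> I \<Longrightarrow> 0 < l i"
  shows "splitting mu c (g ` I) (pool_weight l g I) (pool_post l v g I)"
proof -
  let ?W = "pool_weight l g I"
  have fin: "finite I" and vD: "\<And>i. i \<in> I \<Longrightarrow> v i \<in> Delta"
    and mean: "\<And>w. (\<Sum>i\<in>I. l i * v i w) = mu w" and ent: "H mu - c \<le> (\<Sum>i\<in>I. l i * H (v i))"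
    and total: "sum l I = 1"
    using S by (auto simp: splitting_def)
  have W_pos: "0 < ?W j" if "j \<in> g ` I" for j using pool_weight_pos[of I l, OF fin pos that] .
  have coeffs: "\<And>i. i \<in> {i\<in>I. g i = j} \<Longrightarrow> 0 \<le> l i / ?W j"
    "(\<Sum>i\<in>{i\<in>I. g i = j}. l i / ?W j) = 1" if "j \<in> g ` I" for j
    using W_pos[OF that] pos by (auto simp: pool_weight_def sum_divide_distrib[symmetric] less_imp_le)
  have post: "pool_post l v g I j = (\<lambda>w. \<Sum>i\<in>{i\<in>I. g i = j}. l i / ?W j * v i w)" for j
    by (simp add: pool_post_def fun_eq_iff)
  show ?thesis unfolding splitting_def
  proof (intro conjI ballI allI)
    show "finite (g ` I)" using fin by simp
    show "0 \<le> ?W j" if "j \<in> g ` I" for j using W_pos[OF that] by simp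
    show "pool_post l v g I j \<in> Delta" if "j \<in> g ` I" for j
      unfolding post using fin vD coeffs[OF that] by (intro mixture_in_Delta) auto
    show "sum ?W (g ` I) = 1"
      using sum_regroup_pool[of I l, OF fin pos, of "\<lambda>_. 1" g] coeffs total by simp
    show "(\<Sum>j\<in>g ` I. ?W j * pool_post l v g I j w) = mu w" for w
      using sum_regroup_pool[of I l, OF fin pos, of "\<lambda>i. v i w" g] mean by (simp add: pool_post_def)
    have "(\<Sum>i\<in>I. l i * H (v i)) =
          (\<Sum>j\<in>g ` I. ?W j * (\<Sum>i\<in>{i\<in>I. g i = j}. l i / ?W j * H (v i)))"
      by (rule sum_regroup_pool[of I l, OF fin pos])
    also have "\<dots> \<le> (\<Sum>j\<in>g ` I. ?W j * H (pool_post l v g I j))"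
      unfolding post using fin vD coeffs W_pos
      by (intro sum_mono mult_left_mono H_mixture_ge) (auto intro: less_imp_le)
    finally show "H mu - c \<le> (\<Sum>j\<in>g ` I. ?W j * H (pool_post l v g I j))" using ent by simp
  qed
qed

lemma splitting_value_pool:
  assumes S: "splitting mu c I l v" and pos: "\<And>i. i \<in> I \<Longrightarrow> 0 < l i"
    and best: "\<And>i. i \<in> I \<Longrightarrow> g i \<in> Astar uR (v i)"
  shows "splitting_value uS uR I l v \<le>
         splitting_value uS uR (g ` I) (pool_weight l g I) (pool_post l v g I)"
proof -
  let ?W = "pool_weight l g I"
  have fin: "finite I" using S by (simp add: splitting_def)
  have "splitting_value uS uR I l v =
        (\<Sum>j\<in>g ` I. ?W j * (\<Sum>i\<in>{i\<in>I. g i = j}. l i / ?W j * ustarS uS uR (v i)))"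
    unfolding splitting_value_def by (rule sum_regroup_pool[of I l, OF fin pos])
  also have "\<dots> \<le> (\<Sum>j\<in>g ` I. ?W j * ustarS uS uR (pool_post l v g I j))"
  proof (intro sum_mono mult_left_mono)
    fix j assume j: "j \<in> g ` I"
    show "0 \<le> ?W j" using pool_weight_pos[of I l, OF fin pos j] by simp
    have "pool_post l v g I j = (\<lambda>w. \<Sum>i\<in>{i\<in>I. g i = j}. l i / ?W j * v i w)"
      by (simp add: pool_post_def fun_eq_iff)
    then show "(\<Sum>i\<in>{i\<in>I. g i = j}. l i / ?W j * ustarS uS uR (v i))
               \<le> ustarS uS uR (pool_post l v g I j)"
      using fin pos best pool_weight_pos[of I l, OF fin pos j]
      by (simp only:) (rule ustarS_mixture_ge[where b = j]; auto intro: less_imp_le)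
  qed
  finally show ?thesis by (simp add: splitting_value_def)
qed

lemma splitting_pool_by_best_response:
  fixes uS uR :: "'w::finite \<Rightarrow> 'a::finite \<Rightarrow> real"
  assumes "splitting mu c I l v"
  obtains J :: "'a set" and l' v' where "splitting mu c J l' v'"
    and "splitting_value uS uR I l v \<le> splitting_value uS uR J l' v'"
proof -
  let ?Q = "{i\<in>I. 0 < l i}"
  obtain g where g: "\<And>i. g i \<in> Astar uR (v i)"
    using choice[of "\<lambda>i a. a \<in> Astar uR (v i)"] Astar_nonempty by blast
  note support = splitting_restrict_support[OF assms]
  have pos: "\<And>i. i \<in> ?Q \<Longrightarrow> 0 < l i" by simp
  show ?thesis
  proof (rule that[OF splitting_pool[OF support(1) pos]])
    show "splitting_value uS uR I l v \<le>
          splitting_value uS uR (g ` ?Q) (pool_weight l g ?Q) (pool_post l v g ?Q)"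
      using splitting_value_pool[OF support(1) pos g, of uS] support(2)[of uS uR] by simp
  qed
qed

section \<open>Caratheodory reduction\<close>

lemma exists_nontrivial_linear_relation:
  fixes x :: "'i \<Rightarrow> 'v::euclidean_space"
  assumes fin: "finite I" and big: "DIM('v) < card I"
  obtains d where "(\<Sum>k\<in>I. d k *\<^sub>R x k) = 0" "\<exists>k\<in>I. d k \<noteq> 0"
proof (cases "inj_on x I")
  case False
  then obtain i j where ij: "i \<in> I" "j \<in> I" "i \<noteq> j" "x i = x j" by (auto simp: inj_on_def)
  define d :: "'i \<Rightarrow> real" where "d k = (if k = i then 1 else if k = j then -1 else 0)" for k
  have "(\<Sum>k\<in>I. d k *\<^sub>R x k) = (\<Sum>k\<in>I. (if k = i then x k else 0) - (if k = j then x k else 0))"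
    using ij(3) by (intro sum.cong) (auto simp: d_def)
  also have "\<dots> = 0" using ij fin by (simp add: sum_subtractf)
  finally show ?thesis using that ij(1) by (force simp: d_def)
next
  case True
  have "dependent (x ` I)"
    using card_image[OF True] fin big by (intro dependent_biggerset) auto
  then obtain T U where T: "finite T" "T \<subseteq> x ` I" "(\<Sum>y\<in>T. U y *\<^sub>R y) = 0" "\<exists>y\<in>T. U y \<noteq> 0"
    unfolding dependent_explicit by blast
  define d :: "'i \<Rightarrow> real" where "d k = (if x k \<in> T then U (x k) else 0)" for k
  have "(\<Sum>k\<in>I. d k *\<^sub>R x k) = (\<Sum>y\<in>x ` I. if y \<in> T then U y *\<^sub>R y else 0)"
    by (simp add: sum.reindex[OF True] d_def) (intro sum.cong; simp)
  also have "\<dots> = (\<Sum>y\<in>T. U y *\<^sub>R y)"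
    using fin T(2) by (simp add: sum.inter_restrict[symmetric] Int_absorb1)
  finally have "(\<Sum>k\<in>I. d k *\<^sub>R x k) = 0" using T(3) by simp
  moreover have "\<exists>k\<in>I. d k \<noteq> 0" using T(2,4) by (force simp: d_def)
  ultimately show ?thesis by (rule that)
qed

text \<open>The affine constraints of a splitting (posterior mean and expected entropy) live in
  \<open>\<real>\<^sup>\<Omega> \<times> \<real>\<close>, of dimension \<open>|\<Omega>| + 1\<close>.\<close>
lemma exists_posterior_relation:
  fixes v :: "'i \<Rightarrow> 'w::finite \<Rightarrow> real" and h :: "'i \<Rightarrow> real"
  assumes "finite I" "CARD('w) + 1 < card I"
  obtains d where "\<And>w. (\<Sum>k\<in>I. d k * v k w) = 0" "(\<Sum>k\<in>I. d k * h k) = 0" "\<exists>k\<in>I. d k \<noteq> 0"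
proof -
  define x where "x k = ((\<chi> w. v k w) :: real^'w, h k)" for k
  obtain d where d: "(\<Sum>k\<in>I. d k *\<^sub>R x k) = 0" "\<exists>k\<in>I. d k \<noteq> 0"
    using exists_nontrivial_linear_relation[of I, where x = x] assms by auto
  have "(\<Sum>k\<in>I. d k * v k w) = 0" for w
    using arg_cong[OF d(1), of "\<lambda>p. fst p $ w"] by (simp add: fst_sum x_def)
  moreover have "(\<Sum>k\<in>I. d k * h k) = 0"
    using arg_cong[OF d(1), of snd] by (simp add: snd_sum x_def)
  ultimately show ?thesis using that d(2) by blast
qed

text \<open>The ratio test of Caratheodory's theorem: move \<open>l\<close> along a direction \<open>d\<close> of total mass
  zero until the first coordinate hits zero.\<close>
lemma exists_step_to_boundary:
  fixes l d :: "'i \<Rightarrow> real"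
  assumes fin: "finite I" and l0: "\<And>k. k \<in> I \<Longrightarrow> 0 \<le> l k"
    and d: "sum d I = 0" "\<exists>k\<in>I. d k \<noteq> 0"
  obtains t k0 where "0 \<le> t" "k0 \<in> I" "l k0 + t * d k0 = 0" "\<And>k. k \<in> I \<Longrightarrow> 0 \<le> l k + t * d k"
proof -
  define N where "N = {k\<in>I. d k < 0}"
  have "N \<noteq> {}"
  proof
    assume "N = {}"
    then have "0 \<le> d k" if "k \<in> I" for k using that by (auto simp: N_def not_less)
    then have "\<forall>k\<in>I. d k = 0" using sum_nonneg_eq_0_iff[OF fin, of d] d(1) by blast
    then show False using d(2) by blast
  qed
  moreover have "finite N" using fin by (simp add: N_def)
  ultimately obtain k0 where k0: "k0 \<in> N" "\<And>k. k \<in> N \<Longrightarrow> l k0 / - d k0 \<le> l k / - d k"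
    using ex_is_arg_min_if_finite[of N "\<lambda>k. l k / - d k"] by (auto simp: is_arg_min_linorder)
  define t where "t = l k0 / - d k0"
  have k0I: "k0 \<in> I" "d k0 < 0" using k0(1) by (auto simp: N_def)
  show ?thesis
  proof (rule that)
    show "0 \<le> t" using l0[OF k0I(1)] k0I(2) by (simp add: t_def divide_nonneg_neg)
    show "k0 \<in> I" by (rule k0I(1))
    show "l k0 + t * d k0 = 0" using k0I(2) by (simp add: t_def)
    show "0 \<le> l k + t * d k" if k: "k \<in> I" for k
    proof (cases "d k < 0")
      case True
      with k have "t \<le> l k / - d k" using k0(2) by (simp add: N_def t_def)
      with True have "t * - d k \<le> l k" using pos_le_divide_eq[of "- d k" t "l k"] by simp
      then show ?thesis by simp
    next
      case False
      with \<open>0 \<le> t\<close> l0[OF k] show ?thesis by simp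
    qed
  qed
qed

lemma splitting_drop_posterior:
  fixes v :: "'i \<Rightarrow> 'w::finite \<Rightarrow> real"
  assumes S: "splitting mu c I l v" and big: "CARD('w) + 1 < card I"
  obtains k0 l' where "k0 \<in> I" "splitting mu c (I - {k0}) l' v"
    "splitting_value uS uR I l v \<le> splitting_value uS uR (I - {k0}) l' v"
proof -
  let ?u = "\<lambda>k. ustarS uS uR (v k)"
  have fin: "finite I" and l0: "\<And>i. i \<in> I \<Longrightarrow> 0 \<le> l i" and vD: "\<And>i. i \<in> I \<Longrightarrow> v i \<in> Delta"
    and total: "sum l I = 1" and mean: "\<And>w. (\<Sum>i\<in>I. l i * v i w) = mu w"
    and ent: "H mu - c \<le> (\<Sum>i\<in>I. l i * H (v i))"
    using S by (auto simp: splitting_def)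
  obtain d0 where d0: "\<And>w. (\<Sum>k\<in>I. d0 k * v k w) = 0" "(\<Sum>k\<in>I. d0 k * H (v k)) = 0"
      "\<exists>k\<in>I. d0 k \<noteq> 0"
    using exists_posterior_relation[OF fin big, where h = "\<lambda>k. H (v k)"] by blast
  text \<open>Orient the relation so that moving along it does not lower the sender's value.\<close>
  define d where "d = (if 0 \<le> (\<Sum>k\<in>I. d0 k * ?u k) then d0 else (\<lambda>k. - d0 k))"
  have d_mean: "(\<Sum>k\<in>I. d k * v k w) = 0" for w using d0(1)[of w] by (simp add: d_def sum_negf)
  have d_ent: "(\<Sum>k\<in>I. d k * H (v k)) = 0" using d0(2) by (simp add: d_def sum_negf)
  have d_nz: "\<exists>k\<in>I. d k \<noteq> 0" using d0(3) by (simp add: d_def)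
  have d_gain: "0 \<le> (\<Sum>k\<in>I. d k * ?u k)" by (simp add: d_def sum_negf)
  have "sum d I = (\<Sum>k\<in>I. \<Sum>w\<in>UNIV. d k * v k w)"
    using vD by (intro sum.cong) (simp_all add: Delta_def flip: sum_distrib_left)
  also have "\<dots> = (\<Sum>w\<in>UNIV. \<Sum>k\<in>I. d k * v k w)" by (rule sum.swap)
  also have "\<dots> = 0" using d_mean by simp
  finally have "sum d I = 0" .
  then obtain t k0 where t: "0 \<le> t" "k0 \<in> I" "l k0 + t * d k0 = 0"
      "\<And>k. k \<in> I \<Longrightarrow> 0 \<le> l k + t * d k"
    using exists_step_to_boundary[of I l d, OF fin l0 _ d_nz] by blast
  define l' where "l' k = l k + t * d k" for k
  have shifted: "(\<Sum>k\<in>I - {k0}. l' k * f k) = (\<Sum>k\<in>I. l k * f k) + t * (\<Sum>k\<in>I. d k * f k)"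
    for f :: "'i \<Rightarrow> real"
  proof -
    have "(\<Sum>k\<in>I - {k0}. l' k * f k) = (\<Sum>k\<in>I. l' k * f k)"
      using sum.remove[OF fin t(2), of "\<lambda>k. l' k * f k"] t(3) by (simp add: l'_def)
    also have "\<dots> = (\<Sum>k\<in>I. l k * f k) + t * (\<Sum>k\<in>I. d k * f k)"
      by (simp add: l'_def algebra_simps sum.distrib sum_distrib_left)
    finally show ?thesis .
  qed
  show ?thesis
  proof (rule that[OF t(2)])
    show "splitting mu c (I - {k0}) l' v"
      unfolding splitting_def
      using fin t(4) vD shifted[of "\<lambda>_. 1"] \<open>sum d I = 0\<close> total shifted[of "\<lambda>k. v k _"] d_mean mean
        shifted[of "\<lambda>k. H (v k)"] d_ent ent
      by (auto simp: l'_def)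
    show "splitting_value uS uR I l v \<le> splitting_value uS uR (I - {k0}) l' v"
      unfolding splitting_value_def using shifted[of ?u] d_gain t(1) by simp
  qed
qed

lemma splitting_reduce_to_dimension:
  fixes v :: "'i \<Rightarrow> 'w::finite \<Rightarrow> real"
  shows "splitting mu c I l v \<Longrightarrow> \<exists>J l'. splitting mu c J l' v \<and> card J \<le> CARD('w) + 1 \<and>
           splitting_value uS uR I l v \<le> splitting_value uS uR J l' v"
proof (induction "card I" arbitrary: I l rule: less_induct)
  case less
  show ?case
  proof (cases "card I \<le> CARD('w) + 1")
    case True
    then show ?thesis using less.prems by blast
  next
    case False
    then obtain k0 l' where k0: "k0 \<in> I" "splitting mu c (I - {k0}) l' v"
        "splitting_value uS uR I l v \<le> splitting_value uS uR (I - {k0}) l' v"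
      using splitting_drop_posterior[OF less.prems] by (metis not_le)
    have "card (I - {k0}) < card I"
      using less.prems k0(1) by (intro card_Diff1_less) (auto simp: splitting_def)
    with less.hyps k0(2,3) show ?thesis by (meson order_trans)
  qed
qed

lemma sum_list_map_conv_sum_nth: "(\<Sum>p\<leftarrow>F. f p) = (\<Sum>i<length F. f (F ! i))"
  by (simp add: sum_list_sum_nth atLeast0LessThan)

lemma feasible_iff_splitting:
  "feasible mu c F \<longleftrightarrow> splitting mu c {..<length F} (\<lambda>i. fst (F ! i)) (\<lambda>i. snd (F ! i))"
  by (auto simp: feasible_def splitting_def sum_list_map_conv_sum_nth all_set_conv_all_nth)

lemma objval_eq_splitting_value:
  "objval uS uR F = splitting_value uS uR {..<length F} (\<lambda>i. fst (F ! i)) (\<lambda>i. snd (F ! i))"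
  by (simp add: objval_def splitting_value_def sum_list_map_conv_sum_nth)

lemma feasible_of_splitting:
  assumes "splitting mu c J l v"
  obtains F where "feasible mu c F" "length F = card J" "objval uS uR F = splitting_value uS uR J l v"
proof -
  have "finite J" using assms by (simp add: splitting_def)
  then obtain xs where xs: "set xs = J" "distinct xs" using finite_distinct_list by blast
  let ?F = "map (\<lambda>i. (l i, v i)) xs"
  show ?thesis
  proof (rule that[of ?F])
    show "feasible mu c ?F" using assms xs
      by (auto simp: feasible_def splitting_def o_def sum_list_distinct_conv_sum_set)
    show "length ?F = card J" using distinct_card[OF xs(2)] xs(1) by simp
    show "objval uS uR ?F = splitting_value uS uR J l v" using xs
      by (simp add: objval_def splitting_value_def o_def sum_list_distinct_conv_sum_set)
  qed
qed

lemma feasible_reduce: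
  fixes uS uR :: "'w::finite \<Rightarrow> 'a::finite \<Rightarrow> real"
  assumes "feasible mu c F"
  obtains F' where "feasible mu c F'" "length F' \<le> min CARD('a) (CARD('w) + 1)"
    "objval uS uR F \<le> objval uS uR F'"
proof -
  obtain J :: "'a set" and l v where J: "splitting mu c J l v"
      "objval uS uR F \<le> splitting_value uS uR J l v"
    using splitting_pool_by_best_response[OF assms[unfolded feasible_iff_splitting], of uS uR]
    by (metis objval_eq_splitting_value)
  obtain K l' where K: "splitting mu c K l' v" "card K \<le> CARD('w) + 1"
      "splitting_value uS uR J l v \<le> splitting_value uS uR K l' v"
    using splitting_reduce_to_dimension[OF J(1), of uS uR] by blast
  obtain F' where F': "feasible mu c F'" "length F' = card K"
      "objval uS uR F' = splitting_value uS uR K l' v"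
    using feasible_of_splitting[OF K(1), of uS uR] by blast
  have "card K \<le> CARD('a)" by (rule card_mono) auto
  with K J F' show ?thesis by (intro that[OF F'(1)]) auto
qed

lemma ustarS_le_sum_abs:
  assumes "nu \<in> Delta"
  shows "ustarS uS uR nu \<le> (\<Sum>w\<in>UNIV. \<Sum>a\<in>UNIV. \<bar>uS w a\<bar>)"
proof -
  let ?K = "\<Sum>w\<in>UNIV. \<Sum>a\<in>UNIV. \<bar>uS w a\<bar>"
  obtain a where a: "a \<in> Astar uR nu" using Astar_nonempty by blast
  have "uS w a \<le> ?K" for w
  proof -
    have "uS w a \<le> (\<Sum>b\<in>UNIV. \<bar>uS w b\<bar>)"
      using member_le_sum[of a UNIV "\<lambda>b. \<bar>uS w b\<bar>"] by simp
    also have "\<dots> \<le> ?K" by (rule member_le_sum) (auto intro: sum_nonneg)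
    finally show ?thesis .
  qed
  then have "expu uS nu a \<le> (\<Sum>w\<in>UNIV. nu w * ?K)"
    unfolding expu_def using assms by (intro sum_mono mult_left_mono) (auto simp: Delta_def)
  also have "\<dots> = ?K" using assms by (simp add: Delta_def flip: sum_distrib_right)
  finally show ?thesis using ustarS_le[OF a, of uS] by simp
qed

lemma objval_le_sum_abs:
  assumes "feasible mu c F"
  shows "objval uS uR F \<le> (\<Sum>w\<in>UNIV. \<Sum>a\<in>UNIV. \<bar>uS w a\<bar>)"
proof -
  let ?K = "\<Sum>w\<in>UNIV. \<Sum>a\<in>UNIV. \<bar>uS w a\<bar>"
  have "objval uS uR F \<le> (\<Sum>p\<leftarrow>F. fst p * ?K)"
    unfolding objval_def using assms
    by (intro sum_list_mono mult_left_mono ustarS_le_sum_abs) (auto simp: feasible_def)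
  also have "\<dots> = ?K" using assms by (simp add: feasible_def sum_list_mult_const)
  finally show ?thesis .
qed

theorem corollary3:
  fixes uS uR :: "'w::finite \<Rightarrow> 'a::finite \<Rightarrow> real"
    and mu :: "'w \<Rightarrow> real" and c :: real
  assumes "mu \<in> Delta" and "0 \<le> c"
  shows "V uS uR mu c =
    Sup (objval uS uR ` {F. feasible mu c F \<and> length F \<le> min CARD('a) (CARD('w) + 1)})"
proof -
  let ?A = "objval uS uR ` {F. feasible mu c F}"
  let ?B = "objval uS uR ` {F. feasible mu c F \<and> length F \<le> min CARD('a) (CARD('w) + 1)}"
  have trivial: "feasible mu c [(1, mu)]" using assms by (simp add: feasible_def)
  then have "?B \<noteq> {}" by (force simp: Suc_le_eq)
  have "bdd_above ?A" by (rule bdd_aboveI[where M = "\<Sum>w\<in>UNIV. \<Sum>a\<in>UNIV. \<bar>uS w a\<bar>"])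
      (auto intro: objval_le_sum_abs)
  have "?B \<subseteq> ?A" by blast
  have "Sup ?A \<le> Sup ?B"
  proof (rule cSup_mono)
    show "?A \<noteq> {}" using trivial by blast
    show "bdd_above ?B" using bdd_above_mono[OF \<open>bdd_above ?A\<close> \<open>?B \<subseteq> ?A\<close>] .
    fix x assume "x \<in> ?A"
    then obtain F where "feasible mu c F" "x = objval uS uR F" by blast
    then obtain F' where "feasible mu c F'" "length F' \<le> min CARD('a) (CARD('w) + 1)"
        "x \<le> objval uS uR F'"
      using feasible_reduce[of mu c F uS uR] by blast
    then show "\<exists>y\<in>?B. x \<le> y" by blast
  qed
  moreover have "Sup ?B \<le> Sup ?A" by (rule cSup_subset_mono) fact+
  ultimately show ?thesis unfolding V_def by (rule antisym)
qed

end
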